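(* Let $\alpha, \delta \in (0,1)$ and $\epsilon > 0$. Let $\mathcal{T}_\mathrm{cal}$ be a calibration set of size $n_\mathrm{cal}$ such that $\min_{j = 1, \ldots, K} I_{(1+\epsilon)\mu_j}(a_j, b_j) \geq 1 - \frac{\delta}{K^2}$, where $a_j = \lfloor (n_\mathrm{cal}+1)\frac{\alpha j}{C(K)K}\rfloor$, $b_j = (n_\mathrm{cal}+1) - a_j$, $\mu_j = \frac{a_j}{a_j+b_j}$, $C(K) = (1+\epsilon)\sum_{j=1}^K \frac{1}{j}$, and $I_x(a,b)$ is the regularized incomplete beta function (the CDF of a $\mathrm{Beta}(a,b)$ distribution). Then, for a new input $X_\mathrm{test}$ and an ML model $f(\mathbf{W},\cdot)$, the probability of incorrectly declaring $X_\mathrm{test}$ as OOD conditioned on $\mathcal{T}_\mathrm{cal}$ using the BH-based test below satisfies \[ \mathrm{P}_\mathrm{F}(\mathcal{T}_\mathrm{cal}) = \mathrm{P}_{\mathrm{H}_0}(\text{declare OOD} \mid \mathcal{T}_\mathrm{cal}) \leq \alpha \] with probability at least $1-\delta$ (over the draw of $\mathcal{T}_\mathrm{cal}$).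
   Context: Setting: $(X,Y)\sim \mathrm{P}_{X,Y}$, ML model $f(\mathbf{W},\cdot)$ with prediction $\hat{Y} = f(\mathbf{W},X)$; the in-distribution is $\mathrm{P}_{X,\hat{Y}} = \mathrm{P}_X \times \mathrm{P}_{\hat{Y}\mid X}$. There are $K$ scalar score functions $s^1,\ldots,s^K$ (depending on the ML model) with scores $T^i = s^i(X)$, which may have arbitrary dependence among them. The null hypothesis $\mathrm{H}_0$ (in-distribution) is that all $\mathrm{H}_{0,i}: T^i_\mathrm{test}\sim \mathrm{P}^i$ hold, where $\mathrm{P}^i$ is the distribution of the $i$-th score for in-distribution inputs. The calibration set $\mathcal{T}_\mathrm{cal}$ consists of in-distribution samples, $X_\mathrm{test}$ is independent of $\mathcal{T}_\mathrm{cal}$, and scores have continuous distributions. The test: compute conformal p-values $\hat{Q}^i = \frac{1 + |\{j \in \mathcal{T}_\mathrm{cal} : T^i_j \geq T^i_\mathrm{test}\}|}{1 + n_\mathrm{cal}}$, order them as $\hat{Q}^{(1)}\le\cdots\le\hat{Q}^{(K)}$, let $m = \max\{i : \hat{Q}^{(i)} \leq \frac{\alpha i}{C(K)K}\}$ with $C(K) = (1+\epsilon)\sum_{j=1}^K \frac{1}{j}$, and declare OOD if $m \geq 1$. *)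

theory Defs
  imports "HOL-Probability.Probability"
begin

text \<open>Degenerate case a = 0:
Beta(0,b) is the point mass at 0, so its CDF is 1 for x >= 0.\<close>
definition reg_inc_beta :: "real \<Rightarrow> nat \<Rightarrow> nat \<Rightarrow> real" where
  "reg_inc_beta x a b =
     (if x < 0 then 0
      else if a = 0 then 1
      else if 1 \<le> x then 1
      else (LBINT t=0..x. t powr (real a - 1) * (1 - t) powr (real b - 1))
           / Beta (real a) (real b))"

definition CK :: "real \<Rightarrow> nat \<Rightarrow> real" where
  "CK eps K = (1 + eps) * (\<Sum>j=1..K. 1 / real j)"

definition a_coef :: "real \<Rightarrow> real \<Rightarrow> nat \<Rightarrow> nat \<Rightarrow> nat \<Rightarrow> nat" where
  "a_coef alpha eps K n j = nat \<lfloor>real (n + 1) * (alpha * real j / (CK eps K * real K))\<rfloor>"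

definition b_coef :: "real \<Rightarrow> real \<Rightarrow> nat \<Rightarrow> nat \<Rightarrow> nat \<Rightarrow> nat" where
  "b_coef alpha eps K n j = (n + 1) - a_coef alpha eps K n j"

definition mu_coef :: "real \<Rightarrow> real \<Rightarrow> nat \<Rightarrow> nat \<Rightarrow> nat \<Rightarrow> real" where
  "mu_coef alpha eps K n j =
     real (a_coef alpha eps K n j) / real (a_coef alpha eps K n j + b_coef alpha eps K n j)"

definition conf_pval :: "(nat \<Rightarrow> 'x \<Rightarrow> real) \<Rightarrow> nat \<Rightarrow> (nat \<Rightarrow> 'x) \<Rightarrow> nat \<Rightarrow> 'x \<Rightarrow> real" where
  "conf_pval s n cal i x =
     (1 + real (card {j. j < n \<and> s i (cal j) \<ge> s i x})) / (1 + real n)"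

text \<open>BH-based test: with sorted p-values Q^(1) <= ... <= Q^(K),
m = max{i : Q^(i) <= alpha i/(C(K) K)}; declare OOD iff m >= 1, i.e. iff
some i in {1..K} satisfies the inequality.\<close>
definition bh_declare_ood ::
  "real \<Rightarrow> real \<Rightarrow> nat \<Rightarrow> (nat \<Rightarrow> 'x \<Rightarrow> real) \<Rightarrow> nat \<Rightarrow> (nat \<Rightarrow> 'x) \<Rightarrow> 'x \<Rightarrow> bool" where
  "bh_declare_ood alpha eps K s n cal x =
     (let Qs = sort (map (\<lambda>i. conf_pval s n cal i x) [0..<K])
      in \<exists>i\<in>{1..K}. Qs ! (i - 1) \<le> alpha * real i / (CK eps K * real K))"

end

theory Submission
  imports Defs
begin

text \<open>
  Fix a score \<open>i\<close> and a rank \<open>j\<close>, and call a calibration point good if the survival function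
  \<open>S\<^sub>i\<close> of the \<open>i\<close>-th score, evaluated at its score, is at most
  \<open>c\<^sub>j = (1 + \<epsilon>) \<mu>\<^sub>j\<close>. Because the scores have no atoms, the probability integral
  transform gives \<open>P(S\<^sub>i(s\<^sub>i X) \<le> c\<^sub>j) \<ge> c\<^sub>j\<close>, so the number of good calibration
  points is binomial with success probability at least \<open>c\<^sub>j\<close>. By the identity
  \<open>I\<^sub>c(a, n + 1 - a) = P(Bin(n, c) \<ge> a)\<close>, at least \<open>a\<^sub>j\<close> points are good with
  probability at least \<open>1 - \<delta>/K\<^sup>2\<close>, and a union bound over the \<open>K\<^sup>2\<close> pairs
  \<open>(i, j)\<close> makes this hold for all of them with probability at least \<open>1 - \<delta>\<close>.

  On that event, a conformal p-value \<open>Q\<^sup>i \<le> \<alpha> j / (C(K) K)\<close> means that fewer than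
  \<open>a\<^sub>j\<close> calibration scores reach the test score, so the test score is at least the smallest
  good calibration score \<open>t\<close>; hence \<open>P(Q\<^sup>i \<le> \<alpha> j / (C(K) K)) \<le> S\<^sub>i(t) \<le> c\<^sub>j \<le>
  (1 + \<epsilon>) \<alpha> j / (C(K) K)\<close>. The Benjamini-Yekutieli argument turns these marginal bounds
  into the bound \<open>(1 + \<epsilon>) \<alpha> H\<^sub>K / C(K) = \<alpha>\<close> on the probability that the test
  declares OOD, where \<open>H\<^sub>K\<close> is the \<open>K\<close>-th harmonic number.
\<close>

section \<open>Binomial tails and the incomplete beta function\<close>

definition binomial_tail :: "nat \<Rightarrow> nat \<Rightarrow> real \<Rightarrow> real" where
  "binomial_tail n a p = (\<Sum>k=a..n. real (n choose k) * p ^ k * (1 - p) ^ (n - k))"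

lemma binomial_tail_split:
  assumes "a \<le> n"
  shows "binomial_tail n a p
       = real (n choose a) * p ^ a * (1 - p) ^ (n - a) + binomial_tail n (Suc a) p"
  unfolding binomial_tail_def using assms by (simp add: sum.atLeast_Suc_atMost)

lemma binomial_tail_at_0: "0 < a \<Longrightarrow> binomial_tail n a 0 = 0"
  by (simp add: binomial_tail_def)

lemma binomial_tail_from_0: "binomial_tail n 0 p = 1"
  using binomial_ring[of p "1 - p" n] by (simp add: binomial_tail_def atLeast0AtMost)

lemma binomial_tail_at_1:
  assumes "a \<le> n"
  shows "binomial_tail n a 1 = 1"
proof -
  have "binomial_tail n a 1 = (\<Sum>k=a..n. if k = n then 1 else 0)"
    unfolding binomial_tail_def by (intro sum.cong) (auto simp: power_0_left)
  then show ?thesis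
    using assms by simp
qed

lemma has_real_derivative_binomial_term:
  "((\<lambda>x. x ^ Suc j * (1 - x) ^ (m - j)) has_real_derivative
      real (Suc j) * x ^ j * (1 - x) ^ (m - j) - real (m - j) * x ^ Suc j * (1 - x) ^ (m - Suc j))
    (at x)"
  using DERIV_mult[OF DERIV_pow[of "Suc j" x]
      DERIV_power[OF DERIV_diff[OF DERIV_const[of 1] DERIV_ident], of "m - j"]]
  by (simp add: algebra_simps)

lemma has_real_derivative_binomial_tail:
  assumes "j \<le> m"
  shows "(binomial_tail (Suc m) (Suc j) has_real_derivative
           real (Suc m) * real (m choose j) * x ^ j * (1 - x) ^ (m - j)) (at x)"
  using assms
proof (induction j rule: inc_induct)
  case base
  have "binomial_tail (Suc m) (Suc m) = (\<lambda>x. x ^ Suc m)"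
    by (simp add: binomial_tail_def fun_eq_iff)
  then show ?case
    using DERIV_pow[of "Suc m" x] by simp
next
  case (step j)
  let ?c = "real (Suc m choose Suc j)"
  have tail: "binomial_tail (Suc m) (Suc j)
      = (\<lambda>x. ?c * (x ^ Suc j * (1 - x) ^ (m - j)) + binomial_tail (Suc m) (Suc (Suc j)) x)"
    using step.hyps by (simp add: fun_eq_iff binomial_tail_split mult.assoc)
  have absorb: "?c * real (Suc j) = real (Suc m) * real (m choose j)"
    by (metis Suc_times_binomial of_nat_mult mult.commute)
  have "(m - j) * (Suc m choose Suc j) = Suc m * (m choose Suc j)"
    using binomial_absorb_comp[of "Suc m" "Suc j"] by (simp only: diff_Suc_Suc diff_Suc_1)
  then have absorb_comp: "?c * real (m - j) = real (Suc m) * real (m choose Suc j)"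
    by (simp only: of_nat_mult[symmetric] mult.commute)
  from DERIV_add[OF DERIV_cmult[OF has_real_derivative_binomial_term, of ?c] step.IH]
  show ?case
    unfolding tail
  proof (rule DERIV_cong)
    have "?c * (real (Suc j) * x ^ j * (1 - x) ^ (m - j)
          - real (m - j) * x ^ Suc j * (1 - x) ^ (m - Suc j))
        = (?c * real (Suc j)) * x ^ j * (1 - x) ^ (m - j)
          - (?c * real (m - j)) * x ^ Suc j * (1 - x) ^ (m - Suc j)"
      by (simp only: right_diff_distrib mult.assoc)
    then show "?c * (real (Suc j) * x ^ j * (1 - x) ^ (m - j)
          - real (m - j) * x ^ Suc j * (1 - x) ^ (m - Suc j))
        + real (Suc m) * real (m choose Suc j) * x ^ Suc j * (1 - x) ^ (m - Suc j)
        = real (Suc m) * real (m choose j) * x ^ j * (1 - x) ^ (m - j)"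
      unfolding absorb absorb_comp by simp
  qed
qed

lemma binomial_tail_mono:
  assumes "0 < a" "a \<le> n" "0 \<le> c" "c \<le> p" "p \<le> 1"
  shows "binomial_tail n a c \<le> binomial_tail n a p"
proof -
  obtain j m where jm: "a = Suc j" "n = Suc m" "j \<le> m"
    using assms(1,2) by (metis Suc_le_D Suc_le_mono Suc_pred)
  show ?thesis
  proof (rule DERIV_nonneg_imp_nondecreasing[OF assms(4)])
    fix x assume "c \<le> x" "x \<le> p"
    then have "0 \<le> real (Suc m) * real (m choose j) * x ^ j * (1 - x) ^ (m - j)"
      using assms by simp
    then show "\<exists>y. DERIV (binomial_tail n a) x :> y \<and> 0 \<le> y"
      using has_real_derivative_binomial_tail[OF jm(3)] unfolding jm by blast
  qed
qed

lemma interval_integral_binomial_density: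
  assumes "j \<le> m"
  shows "(LBINT t=0..c. t ^ j * (1 - t) ^ (m - j))
       = binomial_tail (Suc m) (Suc j) c / (real (Suc m) * real (m choose j))"
proof -
  let ?C = "real (Suc m) * real (m choose j)"
  have "?C > 0"
    using assms by simp
  then have "((\<lambda>x. binomial_tail (Suc m) (Suc j) x / ?C) has_real_derivative
      x ^ j * (1 - x) ^ (m - j)) (at x)" for x
    using DERIV_cdivide[OF has_real_derivative_binomial_tail[OF assms], of ?C x]
    by (simp add: mult.assoc leD[OF assms])
  then have "(LBINT t=ereal 0..ereal c. t ^ j * (1 - t) ^ (m - j))
      = binomial_tail (Suc m) (Suc j) c / ?C - binomial_tail (Suc m) (Suc j) 0 / ?C"
    by (intro interval_integral_FTC_finite continuous_intros)
      (simp add: has_real_derivative_iff_has_vector_derivative[symmetric]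
        has_field_derivative_at_within)
  then show ?thesis
    by (simp add: binomial_tail_at_0 zero_ereal_def)
qed

lemma Beta_of_nat_Suc:
  "Beta (real (Suc j)) (real (Suc l)) = fact j * fact l / fact (Suc (j + l))"
proof -
  have "Gamma (real (Suc k)) = fact k" for k
    using Gamma_fact[of k] by (simp add: add.commute)
  then show ?thesis
    by (simp only: Beta_def of_nat_add[symmetric] add_Suc add_Suc_right)
qed

lemma reg_inc_beta_eq_binomial_tail:
  assumes "0 < a" "a \<le> n" "0 \<le> c" "c < 1"
  shows "reg_inc_beta c a (n + 1 - a) = binomial_tail n a c"
proof -
  obtain j m where jm: "a = Suc j" "n = Suc m" "j \<le> m"
    using assms(1,2) by (metis Suc_le_D Suc_le_mono Suc_pred)
  have b: "n + 1 - a = Suc (m - j)"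
    using jm by simp
  have "(LBINT t=0..c. t powr (real a - 1) * (1 - t) powr (real (n + 1 - a) - 1))
      = (LBINT t=0..c. t ^ j * (1 - t) ^ (m - j))"
  proof (rule interval_integral_cong)
    fix t assume "t \<in> einterval (min 0 (ereal c)) (max 0 (ereal c))"
    then have "0 < t" "t < 1"
      using assms by (auto simp: einterval_def)
    then show "t powr (real a - 1) * (1 - t) powr (real (n + 1 - a) - 1)
        = t ^ j * (1 - t) ^ (m - j)"
      unfolding b by (simp add: jm(1) powr_realpow)
  qed
  moreover have "Beta (real a) (real (n + 1 - a)) = 1 / (real (Suc m) * real (m choose j))"
    unfolding b unfolding jm(1) Beta_of_nat_Suc using jm(3) by (simp add: binomial_fact field_simps)
  ultimately show ?thesis
    using assms jm interval_integral_binomial_density[OF jm(3), of c]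
    by (simp add: reg_inc_beta_def)
qed

section \<open>Finite powers of a probability space\<close>

lemma (in prob_space) prob_Collect_not:
  assumes "{x \<in> space M. P x} \<in> events"
  shows "prob {x \<in> space M. \<not> P x} = 1 - prob {x \<in> space M. P x}"
proof -
  have "space M - {x \<in> space M. P x} = {x \<in> space M. \<not> P x}"
    by blast
  then show ?thesis
    using prob_compl[OF assms] by simp
qed

lemma (in prob_space) prob_Collect_Ball_ge:
  assumes "finite I" "\<And>i. i \<in> I \<Longrightarrow> {x \<in> space M. P i x} \<in> events"
    and "\<And>i. i \<in> I \<Longrightarrow> 1 - e \<le> prob {x \<in> space M. P i x}"
  shows "1 - real (card I) * e \<le> prob {x \<in> space M. \<forall>i\<in>I. P i x}"
proof -
  have "{x \<in> space M. \<exists>i\<in>I. \<not> P i x} = (\<Union>i\<in>I. {x \<in> space M. \<not> P i x})"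
    by blast
  then have "prob {x \<in> space M. \<exists>i\<in>I. \<not> P i x} \<le> (\<Sum>i\<in>I. prob {x \<in> space M. \<not> P i x})"
    using assms(1,2) by (auto intro!: finite_measure_subadditive_finite)
  also have "\<dots> \<le> (\<Sum>i\<in>I. e)"
  proof (rule sum_mono)
    fix i assume "i \<in> I"
    then show "prob {x \<in> space M. \<not> P i x} \<le> e"
      using assms(3) prob_Collect_not[OF assms(2)] by fastforce
  qed
  finally show ?thesis
    using prob_Collect_not[of "\<lambda>x. \<forall>i\<in>I. P i x"] assms(1,2) by auto
qed

lemma finite_product_prob_space_const:
  assumes "prob_space M" "finite I"
  shows "finite_product_prob_space (\<lambda>_. M) I"
proof -
  have "product_prob_space (\<lambda>_. M)"
    using assms(1) by (rule product_prob_spaceI)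
  then show ?thesis
    using assms(2)
    by (intro finite_product_prob_space.intro finite_product_sigma_finite.intro
        finite_product_sigma_finite_axioms.intro)
      (auto simp: product_prob_space_def)
qed

lemma sets_Collect_finite_Collect:
  assumes "finite I" "\<And>i. i \<in> I \<Longrightarrow> {x \<in> space M. P i x} \<in> sets M"
  shows "{x \<in> space M. R {i \<in> I. P i x}} \<in> sets M"
proof -
  have "Measurable.pred M (\<lambda>x. \<exists>S\<in>Pow I. R S \<and> (\<forall>i\<in>I. (i \<in> S) = P i x))"
    using assms
    by (intro pred_intros_finite pred_intros_logic measurable_const)
      (auto simp: Measurable.pred_def)
  moreover have "(\<exists>S\<in>Pow I. R S \<and> (\<forall>i\<in>I. (i \<in> S) = P i x)) \<longleftrightarrow> R {i \<in> I. P i x}" for x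
  proof
    assume "\<exists>S\<in>Pow I. R S \<and> (\<forall>i\<in>I. (i \<in> S) = P i x)"
    then obtain S where "S \<subseteq> I" "R S" "\<forall>i\<in>I. (i \<in> S) = P i x"
      by blast
    moreover from this have "S = {i \<in> I. P i x}"
      by blast
    ultimately show "R {i \<in> I. P i x}"
      by simp
  next
    assume "R {i \<in> I. P i x}"
    then show "\<exists>S\<in>Pow I. R S \<and> (\<forall>i\<in>I. (i \<in> S) = P i x)"
      by (intro bexI[of _ "{i \<in> I. P i x}"]) auto
  qed
  ultimately show ?thesis
    by (simp add: Measurable.pred_def)
qed

lemma (in sigma_finite_measure) borel_measurable_measure_section:
  assumes "{\<omega> \<in> space (N \<Otimes>\<^sub>M M). P (fst \<omega>) (snd \<omega>)} \<in> sets (N \<Otimes>\<^sub>M M)"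
  shows "(\<lambda>y. measure M {x \<in> space M. P y x}) \<in> borel_measurable N"
proof -
  let ?D = "{\<omega> \<in> space (N \<Otimes>\<^sub>M M). P (fst \<omega>) (snd \<omega>)}"
  have "(\<lambda>y. enn2real (emeasure M (Pair y -` ?D))) \<in> borel_measurable N"
    using measurable_emeasure_Pair[OF assms] by measurable
  moreover have "Pair y -` ?D = {x \<in> space M. P y x}" if "y \<in> space N" for y
    using that by (auto simp: space_pair_measure)
  ultimately show ?thesis
    by (simp add: measure_def cong: measurable_cong)
qed

lemma sets_PiM_Collect_hits:
  fixes n :: nat
  assumes "{x \<in> space M. P x} \<in> sets M"
  shows "{\<omega> \<in> space (PiM {..<n} (\<lambda>_. M)). R {k. k < n \<and> P (\<omega> k)}} \<in> sets (PiM {..<n} (\<lambda>_. M))"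
proof -
  have "{\<omega> \<in> space (PiM {..<n} (\<lambda>_. M)). R {k \<in> {..<n}. P (\<omega> k)}} \<in> sets (PiM {..<n} (\<lambda>_. M))"
    using assms by (intro sets_Collect_finite_Collect sets_Collect_single') simp_all
  then show ?thesis
    unfolding lessThan_iff .
qed

lemma measure_PiM_hits_eq:
  assumes "prob_space M" "{x \<in> space M. P x} \<in> sets M" "S \<subseteq> {..<n}"
  shows "measure (PiM {..<n} (\<lambda>_. M)) {\<omega> \<in> space (PiM {..<n} (\<lambda>_. M)). {k. k < n \<and> P (\<omega> k)} = S}
       = measure M {x \<in> space M. P x} ^ card S * (1 - measure M {x \<in> space M. P x}) ^ (n - card S)"
proof -
  interpret M: prob_space M by fact
  interpret P: finite_product_prob_space "\<lambda>_. M" "{..<n}"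
    using finite_product_prob_space_const[OF assms(1) finite_lessThan] .
  let ?Y = "{x \<in> space M. P x}"
  let ?p = "measure M ?Y"
  have "\<omega> \<in> (\<Pi>\<^sub>E k\<in>{..<n}. if k \<in> S then ?Y else space M - ?Y)
      \<longleftrightarrow> \<omega> \<in> space (PiM {..<n} (\<lambda>_. M)) \<and> {k. k < n \<and> P (\<omega> k)} = S" for \<omega>
    using assms(3) unfolding space_PiM PiE_iff by auto
  then have box: "{\<omega> \<in> space (PiM {..<n} (\<lambda>_. M)). {k. k < n \<and> P (\<omega> k)} = S}
      = (\<Pi>\<^sub>E k\<in>{..<n}. if k \<in> S then ?Y else space M - ?Y)"
    by blast
  have "measure (PiM {..<n} (\<lambda>_. M)) {\<omega> \<in> space (PiM {..<n} (\<lambda>_. M)). {k. k < n \<and> P (\<omega> k)} = S}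
      = (\<Prod>k<n. if k \<in> S then ?p else 1 - ?p)"
    unfolding box using assms(2)
    by (subst P.finite_measure_PiM_emb) (auto intro!: prod.cong simp: M.prob_compl)
  also have "\<dots> = ?p ^ card S * (1 - ?p) ^ card ({..<n} - S)"
    using assms(3) by (subst prod.If_cases) (simp_all add: inf.absorb2 Diff_eq[symmetric])
  also have "card ({..<n} - S) = n - card S"
    using assms(3) finite_subset[of S "{..<n}"] by (simp add: card_Diff_subset)
  finally show ?thesis .
qed

lemma measure_PiM_card_eq_binomial:
  assumes "prob_space M" "{x \<in> space M. P x} \<in> sets M"
  shows "measure (PiM {..<n} (\<lambda>_. M))
           {\<omega> \<in> space (PiM {..<n} (\<lambda>_. M)). card {k. k < n \<and> P (\<omega> k)} = m}
       = real (n choose m) * measure M {x \<in> space M. P x} ^ m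
           * (1 - measure M {x \<in> space M. P x}) ^ (n - m)"
proof -
  interpret P: prob_space "PiM {..<n} (\<lambda>_. M)"
    using assms(1) by (rule prob_space_PiM)
  let ?P = "PiM {..<n} (\<lambda>_. M)" and ?p = "measure M {x \<in> space M. P x}"
  let ?SS = "{S. S \<subseteq> {..<n} \<and> card S = m}"
  define A where "A S = {\<omega> \<in> space ?P. {k. k < n \<and> P (\<omega> k)} = S}" for S
  have "{\<omega> \<in> space ?P. card {k. k < n \<and> P (\<omega> k)} = m} = (\<Union>S\<in>?SS. A S)"
    by (auto simp: A_def)
  moreover have "measure ?P (\<Union>S\<in>?SS. A S) = (\<Sum>S\<in>?SS. measure ?P (A S))"
  proof (rule P.finite_measure_finite_Union)
    show "finite ?SS"
      by (rule finite_subset[of _ "Pow {..<n}"]) auto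
    show "A ` ?SS \<subseteq> P.events"
    proof (rule image_subsetI)
      show "A S \<in> P.events" for S
        unfolding A_def by (rule sets_PiM_Collect_hits[OF assms(2), of n "\<lambda>Z. Z = S"])
    qed
    show "disjoint_family_on A ?SS"
      by (auto simp: A_def disjoint_family_on_def)
  qed
  moreover have "(\<Sum>S\<in>?SS. measure ?P (A S)) = (\<Sum>S\<in>?SS. ?p ^ m * (1 - ?p) ^ (n - m))"
    unfolding A_def by (intro sum.cong) (simp_all add: measure_PiM_hits_eq[OF assms])
  ultimately show ?thesis
    using n_subsets[of "{..<n}" m] by simp
qed

lemma measure_PiM_card_ge_binomial_tail:
  assumes "prob_space M" "{x \<in> space M. P x} \<in> sets M"
  shows "measure (PiM {..<n} (\<lambda>_. M))
           {\<omega> \<in> space (PiM {..<n} (\<lambda>_. M)). a \<le> card {k. k < n \<and> P (\<omega> k)}}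
       = binomial_tail n a (measure M {x \<in> space M. P x})"
proof -
  interpret P: prob_space "PiM {..<n} (\<lambda>_. M)"
    using assms(1) by (rule prob_space_PiM)
  let ?P = "PiM {..<n} (\<lambda>_. M)"
  define B where "B m = {\<omega> \<in> space ?P. card {k. k < n \<and> P (\<omega> k)} = m}" for m
  have "card {k. k < n \<and> P (\<omega> k)} \<le> n" for \<omega>
    using card_mono[of "{..<n}" "{k. k < n \<and> P (\<omega> k)}"] by auto
  then have eq: "{\<omega> \<in> space ?P. a \<le> card {k. k < n \<and> P (\<omega> k)}} = (\<Union>m\<in>{a..n}. B m)"
    unfolding B_def by fastforce
  have "measure ?P (\<Union>m\<in>{a..n}. B m) = (\<Sum>m=a..n. measure ?P (B m))"
  proof (rule P.finite_measure_finite_Union)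
    show "B ` {a..n} \<subseteq> P.events"
    proof (rule image_subsetI)
      show "B m \<in> P.events" for m
        unfolding B_def by (rule sets_PiM_Collect_hits[OF assms(2), of n "\<lambda>S. card S = m"])
    qed
    show "disjoint_family_on B {a..n}"
      unfolding B_def disjoint_family_on_def by blast
  qed simp
  then show ?thesis
    unfolding eq unfolding B_def measure_PiM_card_eq_binomial[OF assms] binomial_tail_def .
qed

section \<open>Survival functions and the probability integral transform\<close>

definition survival :: "'a measure \<Rightarrow> ('a \<Rightarrow> real) \<Rightarrow> real \<Rightarrow> real" where
  "survival M f t = measure M {x \<in> space M. t \<le> f x}"

lemma (in finite_measure) survival_antimono:
  assumes "f \<in> borel_measurable M" "t \<le> u"
  shows "survival M f u \<le> survival M f t"
  unfolding survival_def using assms by (intro finite_measure_mono) auto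

lemma (in finite_measure) borel_measurable_survival:
  assumes "f \<in> borel_measurable M"
  shows "survival M f \<in> borel_measurable borel"
proof -
  have "mono (\<lambda>t. - survival M f t)"
    using survival_antimono[OF assms] by (auto simp: mono_def)
  then have "(\<lambda>t. - (- survival M f t)) \<in> borel_measurable borel"
    by (intro borel_measurable_uminus borel_measurable_mono)
  then show ?thesis
    by simp
qed

lemma (in finite_measure) sets_survival_le:
  assumes [measurable]: "f \<in> borel_measurable M"
  shows "{x \<in> space M. survival M f (f x) \<le> c} \<in> sets M"
proof -
  have [measurable]: "survival M f \<in> borel_measurable borel"
    by (rule borel_measurable_survival) fact
  show ?thesis
    by measurable
qed

lemma (in prob_space) cdf_distr:
  assumes "f \<in> borel_measurable M"
  shows "cdf (distr M borel f) t = prob {x \<in> space M. f x \<le> t}"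
  using assms by (simp add: cdf_def measure_distr vimage_def Int_def conj_commute)

lemma (in prob_space) survival_eq_1_minus_cdf:
  assumes "f \<in> borel_measurable M" "prob {x \<in> space M. f x = t} = 0"
  shows "survival M f t = 1 - cdf (distr M borel f) t"
proof -
  have "cdf (distr M borel f) t = prob {x \<in> space M. f x \<le> t}"
    using assms(1) by (rule cdf_distr)
  also have "\<dots> = prob {x \<in> space M. f x < t} + prob {x \<in> space M. f x = t}"
    using assms(1) by (subst finite_measure_Union[symmetric]) (auto intro!: arg_cong[where f=prob])
  also have "prob {x \<in> space M. f x < t} = 1 - survival M f t"
    using assms(1) prob_Collect_not[of "\<lambda>x. t \<le> f x"] by (simp add: survival_def not_le)
  finally show ?thesis
    using assms(2) by simp
qed

lemma (in prob_space) cdf_distr_attains: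
  assumes f: "f \<in> borel_measurable M" and no_atoms: "\<And>t. prob {x \<in> space M. f x = t} = 0"
    and "0 < p" "p < 1"
  obtains t where "cdf (distr M borel f) t = p"
proof -
  interpret F: real_distribution "distr M borel f"
    using f by simp
  let ?F = "cdf (distr M borel f)"
  have "eventually (\<lambda>t. ?F t < p) at_bot"
    using F.cdf_lim_at_bot \<open>0 < p\<close> by (rule order_tendstoD)
  then obtain a where a: "?F a < p"
    by (auto simp: eventually_at_bot_linorder)
  have "eventually (\<lambda>t. p < ?F t) at_top"
    using F.cdf_lim_at_top_prob \<open>p < 1\<close> by (rule order_tendstoD)
  then obtain b where "\<forall>t\<ge>b. p < ?F t"
    by (auto simp: eventually_at_top_linorder)
  then have b: "a \<le> max a b" "p < ?F (max a b)"
    by auto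
  have "isCont ?F t" for t
    using no_atoms[of t] f by (simp add: F.isCont_cdf measure_distr vimage_def Int_def conj_commute)
  then show ?thesis
    using IVT[of ?F a p "max a b"] a b that by auto
qed

theorem (in prob_space) probability_integral_transform:
  assumes f: "f \<in> borel_measurable M" and no_atoms: "\<And>t. prob {x \<in> space M. f x = t} = 0"
    and "c \<le> 1"
  shows "c \<le> prob {x \<in> space M. survival M f (f x) \<le> c}"
proof -
  consider "c \<le> 0" | "c = 1" | "0 < c" "c < 1"
    using \<open>c \<le> 1\<close> by linarith
  then show ?thesis
  proof cases
    case 1
    then show ?thesis
      by (meson measure_nonneg order_trans)
  next
    case 2
    have "survival M f t \<le> 1" for t
      unfolding survival_def by (rule prob_le_1)
    then show ?thesis
      using 2 by (simp add: prob_space)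
  next
    case 3
    interpret F: real_distribution "distr M borel f"
      using f by simp
    let ?F = "cdf (distr M borel f)"
    obtain t where t: "?F t = 1 - c"
      using cdf_distr_attains[OF f no_atoms, of "1 - c"] 3 by auto
    have "survival M f (f x) \<le> c" if "t < f x" for x
      using F.cdf_nondecreasing[of t "f x"] that t
      by (simp add: survival_eq_1_minus_cdf[OF f no_atoms])
    then have "{x \<in> space M. t < f x} \<subseteq> {x \<in> space M. survival M f (f x) \<le> c}"
      by blast
    then have "prob {x \<in> space M. t < f x} \<le> prob {x \<in> space M. survival M f (f x) \<le> c}"
      using sets_survival_le[OF f] by (rule finite_measure_mono)
    moreover have "prob {x \<in> space M. t < f x} = c"
      using f prob_Collect_not[of "\<lambda>x. f x \<le> t"] t by (simp add: cdf_distr not_le)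
    ultimately show ?thesis
      by simp
  qed
qed

lemma conf_pval_le_iff:
  assumes "0 \<le> r"
  shows "conf_pval s n cal i x \<le> r \<longleftrightarrow>
         1 + card {j. j < n \<and> s i x \<le> s i (cal j)} \<le> nat \<lfloor>real (n + 1) * r\<rfloor>"
proof -
  let ?C = "card {j. j < n \<and> s i x \<le> s i (cal j)}"
  have "conf_pval s n cal i x \<le> r \<longleftrightarrow> real (1 + ?C) \<le> real (n + 1) * r"
    by (simp add: conf_pval_def divide_le_eq algebra_simps)
  also have "\<dots> \<longleftrightarrow> int (1 + ?C) \<le> \<lfloor>real (n + 1) * r\<rfloor>"
    by (simp add: le_floor_iff)
  also have "\<dots> \<longleftrightarrow> 1 + ?C \<le> nat \<lfloor>real (n + 1) * r\<rfloor>"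
    using assms by (simp add: le_nat_iff)
  finally show ?thesis .
qed

lemma sets_conf_pval_le:
  assumes "s i \<in> borel_measurable M" "0 \<le> r"
  shows "{x \<in> space M. conf_pval s n cal i x \<le> r} \<in> sets M"
proof -
  have "{x \<in> space M. (\<lambda>S. 1 + card S \<le> nat \<lfloor>real (n + 1) * r\<rfloor>)
      {k \<in> {..<n}. s i x \<le> s i (cal k)}} \<in> sets M"
    using assms(1) by (intro sets_Collect_finite_Collect) measurable
  then show ?thesis
    unfolding conf_pval_le_iff[OF assms(2)] lessThan_iff .
qed

lemma (in finite_measure) measure_conformal_rank_le:
  fixes n :: nat
  assumes f: "f \<in> borel_measurable M" and "0 \<le> c"
    and many: "a \<le> card {k. k < n \<and> survival M f (f (cal k)) \<le> c}"
  shows "measure M {x \<in> space M. 1 + card {j. j < n \<and> f x \<le> f (cal j)} \<le> a} \<le> c"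
proof (cases "a = 0")
  case True
  then show ?thesis
    using \<open>0 \<le> c\<close> by simp
next
  case False
  define G where "G = {k. k < n \<and> survival M f (f (cal k)) \<le> c}"
  have "finite G"
    by (simp add: G_def)
  have "G \<noteq> {}"
    using many False by (auto simp: G_def[symmetric])
  txt \<open>A test point below the smallest good calibration score \<open>t\<close> would be exceeded
    by all \<open>a\<close> or more good calibration scores.\<close>
  define t where "t = Min ((\<lambda>k. f (cal k)) ` G)"
  have "t \<in> (\<lambda>k. f (cal k)) ` G"
    unfolding t_def using \<open>finite G\<close> \<open>G \<noteq> {}\<close> by (intro Min_in) auto
  then obtain k0 where "k0 \<in> G" "t = f (cal k0)"
    by blast
  then have "survival M f t \<le> c"
    by (simp add: G_def)
  have t_le: "t \<le> f (cal k)" if "k \<in> G" for k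
    unfolding t_def using \<open>finite G\<close> that by (intro Min_le) auto
  have "t \<le> f x" if "x \<in> space M" "1 + card {j. j < n \<and> f x \<le> f (cal j)} \<le> a" for x
  proof (rule ccontr)
    assume "\<not> t \<le> f x"
    then have "G \<subseteq> {j. j < n \<and> f x \<le> f (cal j)}"
      using t_le by (force simp: G_def)
    then have "card G \<le> card {j. j < n \<and> f x \<le> f (cal j)}"
      by (intro card_mono) auto
    then show False
      using that many unfolding G_def by linarith
  qed
  then have "measure M {x \<in> space M. 1 + card {j. j < n \<and> f x \<le> f (cal j)} \<le> a}
      \<le> survival M f t"
    unfolding survival_def using f by (intro finite_measure_mono) auto
  with \<open>survival M f t \<le> c\<close> show ?thesis
    by linarith
qed

lemma (in finite_measure) measure_conf_pval_le:
  assumes "s i \<in> borel_measurable M" "0 \<le> r" "0 \<le> c"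
    and "nat \<lfloor>real (n + 1) * r\<rfloor> \<le> card {k. k < n \<and> survival M (s i) (s i (cal k)) \<le> c}"
  shows "measure M {x \<in> space M. conf_pval s n cal i x \<le> r} \<le> c"
  using measure_conformal_rank_le[OF assms(1,3,4)] by (simp add: conf_pval_le_iff[OF assms(2)])

lemma (in prob_space) reg_inc_beta_le_prob_PiM_card:
  fixes n :: nat
  assumes f: "f \<in> borel_measurable M" and no_atoms: "\<And>t. prob {x \<in> space M. f x = t} = 0"
    and "a \<le> n" "0 \<le> c"
  shows "reg_inc_beta c a (n + 1 - a)
       \<le> measure (PiM {..<n} (\<lambda>_. M))
           {cal \<in> space (PiM {..<n} (\<lambda>_. M)). a \<le> card {k. k < n \<and> survival M f (f (cal k)) \<le> c}}"
proof -
  let ?p = "prob {x \<in> space M. survival M f (f x) \<le> c}"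
  have measure_eq: "measure (PiM {..<n} (\<lambda>_. M))
      {cal \<in> space (PiM {..<n} (\<lambda>_. M)). a \<le> card {k. k < n \<and> survival M f (f (cal k)) \<le> c}}
      = binomial_tail n a ?p"
    by (rule measure_PiM_card_ge_binomial_tail[OF prob_space_axioms sets_survival_le[OF f]])
  consider "a = 0" | "1 \<le> c" | "0 < a" "c < 1"
    by linarith
  then show ?thesis
  proof cases
    case 1
    then show ?thesis
      using \<open>0 \<le> c\<close> unfolding measure_eq by (simp add: binomial_tail_from_0 reg_inc_beta_def)
  next
    case 2
    have "survival M f t \<le> c" for t
      unfolding survival_def using prob_le_1[of "{x \<in> space M. t \<le> f x}"] 2 by linarith
    then have "?p = 1"
      by (simp add: prob_space)
    then show ?thesis
      using 2 \<open>a \<le> n\<close> by (simp add: measure_eq binomial_tail_at_1 reg_inc_beta_def)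
  next
    case 3
    have "c \<le> ?p"
      using f no_atoms 3 by (intro probability_integral_transform) auto
    then have "binomial_tail n a c \<le> binomial_tail n a ?p"
      using 3 \<open>a \<le> n\<close> \<open>0 \<le> c\<close> by (intro binomial_tail_mono) auto
    then show ?thesis
      unfolding measure_eq reg_inc_beta_eq_binomial_tail[OF 3(1) \<open>a \<le> n\<close> \<open>0 \<le> c\<close> 3(2)] .
  qed
qed

section \<open>Step-up tests and the Benjamini-Yekutieli bound\<close>

definition step_up_rejects :: "nat \<Rightarrow> (nat \<Rightarrow> real) \<Rightarrow> (nat \<Rightarrow> real) \<Rightarrow> bool" where
  "step_up_rejects K q Q \<longleftrightarrow> (\<exists>j\<in>{1..K}. sort (map Q [0..<K]) ! (j - 1) \<le> q j)"

lemma step_up_rejects_cong: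
  "(\<And>i. i < K \<Longrightarrow> Q i = Q' i) \<Longrightarrow> step_up_rejects K q Q = step_up_rejects K q Q'"
  unfolding step_up_rejects_def by (metis (no_types, lifting) atLeastLessThan_iff map_cong set_upt)

lemma sorted_nth_le_imp_length_filter:
  fixes xs :: "'a::linorder list"
  assumes "sorted xs" "k < length xs" "xs ! k \<le> t"
  shows "Suc k \<le> length (filter (\<lambda>v. v \<le> t) xs)"
proof -
  have "xs ! i \<le> t" if "i < Suc k" for i
    using sorted_nth_mono[OF assms(1), of i k] that assms(2,3) by simp
  then have "\<forall>v\<in>set (take (Suc k) xs). v \<le> t"
    by (auto simp: in_set_conv_nth)
  then have "length (filter (\<lambda>v. v \<le> t) (take (Suc k) xs)) = Suc k"
    using assms(2) by simp
  moreover have "length (filter (\<lambda>v. v \<le> t) (take (Suc k) xs)) \<le> length (filter (\<lambda>v. v \<le> t) xs)"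
    by (metis append_take_drop_id filter_append le_add1 length_append)
  ultimately show ?thesis
    by simp
qed

lemma step_up_rejects_imp_card:
  assumes "step_up_rejects K q Q"
  obtains j where "j \<in> {1..K}" "j \<le> card {i. i < K \<and> Q i \<le> q j}"
proof -
  obtain j where j: "j \<in> {1..K}" "sort (map Q [0..<K]) ! (j - 1) \<le> q j"
    using assms by (auto simp: step_up_rejects_def)
  then have "Suc (j - 1) \<le> length (filter (\<lambda>v. v \<le> q j) (sort (map Q [0..<K])))"
    by (intro sorted_nth_le_imp_length_filter) auto
  also have "\<dots> = length (filter (\<lambda>v. v \<le> q j) (map Q [0..<K]))"
    by (metis mset_filter mset_sort size_mset)
  also have "\<dots> = card {i. i < K \<and> Q i \<le> q j}"
    unfolding length_filter_conv_card by (intro arg_cong[where f=card] Collect_cong) auto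
  finally show ?thesis
    using j that by simp
qed

definition BY_weight :: "nat \<Rightarrow> nat \<Rightarrow> real" where
  "BY_weight K j = (if j < K then 1 / real j - 1 / real (Suc j) else 1 / real K)"

lemma BY_weight_nonneg: "0 < j \<Longrightarrow> 0 \<le> BY_weight K j"
  by (simp add: BY_weight_def frac_le)

lemma sum_BY_weight_tail:
  assumes "0 < k" "k \<le> K"
  shows "(\<Sum>j=k..K. BY_weight K j) = 1 / real k"
  using assms(2,1)
proof (induction k rule: inc_induct)
  case base
  then show ?case
    by (simp add: BY_weight_def)
next
  case (step k)
  then show ?case
    by (simp add: sum.atLeast_Suc_atMost BY_weight_def)
qed

lemma sum_BY_weight_times:
  "(\<Sum>j=1..K. BY_weight K j * real j) = (\<Sum>k=1..K. 1 / real k)"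
proof -
  have "(\<Sum>j=1..K. BY_weight K j * real j) = (\<Sum>j=1..K. \<Sum>k\<in>{k\<in>{1..K}. k \<le> j}. BY_weight K j)"
  proof (rule sum.cong)
    fix j assume "j \<in> {1..K}"
    then have "{k\<in>{1..K}. k \<le> j} = {1..j}"
      by auto
    then show "BY_weight K j * real j = (\<Sum>k\<in>{k\<in>{1..K}. k \<le> j}. BY_weight K j)"
      by simp
  qed simp
  also have "\<dots> = (\<Sum>k=1..K. \<Sum>j\<in>{j\<in>{1..K}. k \<le> j}. BY_weight K j)"
    by (rule sum.swap_restrict) simp_all
  also have "\<dots> = (\<Sum>k=1..K. 1 / real k)"
  proof (rule sum.cong)
    fix k assume "k \<in> {1..K}"
    then have "{j\<in>{1..K}. k \<le> j} = {k..K}"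
      by auto
    then show "(\<Sum>j\<in>{j\<in>{1..K}. k \<le> j}. BY_weight K j) = 1 / real k"
      using \<open>k \<in> {1..K}\<close> by (simp add: sum_BY_weight_tail)
  qed simp
  finally show ?thesis .
qed

lemma step_up_rejects_imp_weight_sum_ge:
  assumes "step_up_rejects K q Q" and mono: "\<And>j j'. j \<le> j' \<Longrightarrow> q j \<le> q j'"
  shows "1 \<le> (\<Sum>i<K. \<Sum>j=1..K. BY_weight K j * of_bool (Q i \<le> q j))"
proof -
  obtain j0 where j0: "j0 \<in> {1..K}" and card: "j0 \<le> card {i. i < K \<and> Q i \<le> q j0}"
    using step_up_rejects_imp_card[OF assms(1)] .
  let ?I = "{i. i < K \<and> Q i \<le> q j0}"
  let ?h = "\<lambda>i. \<Sum>j=1..K. BY_weight K j * of_bool (Q i \<le> q j)"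
  have h_nonneg: "0 \<le> ?h i" for i
    by (intro sum_nonneg mult_nonneg_nonneg BY_weight_nonneg) auto
  have "1 / real j0 \<le> ?h i" if "i \<in> ?I" for i
  proof -
    have "(\<Sum>j=j0..K. BY_weight K j * of_bool (Q i \<le> q j)) = (\<Sum>j=j0..K. BY_weight K j)"
      using that mono by (intro sum.cong) (auto intro: order_trans)
    also have "\<dots> = 1 / real j0"
      using j0 by (intro sum_BY_weight_tail) auto
    finally have "(\<Sum>j=j0..K. BY_weight K j * of_bool (Q i \<le> q j)) = 1 / real j0" .
    moreover have "(\<Sum>j=j0..K. BY_weight K j * of_bool (Q i \<le> q j)) \<le> ?h i"
      using j0 by (intro sum_mono2) (auto intro!: mult_nonneg_nonneg BY_weight_nonneg)
    ultimately show ?thesis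
      by simp
  qed
  then have "real (card ?I) * (1 / real j0) \<le> (\<Sum>i\<in>?I. ?h i)"
    using sum_mono[of ?I "\<lambda>_. 1 / real j0" ?h] by simp
  moreover have "1 \<le> real (card ?I) * (1 / real j0)"
    using card j0 by (simp add: field_simps)
  moreover have "(\<Sum>i\<in>?I. ?h i) \<le> (\<Sum>i<K. ?h i)"
    using h_nonneg by (intro sum_mono2) auto
  ultimately show ?thesis
    by linarith
qed

theorem (in prob_space) Benjamini_Yekutieli:
  fixes Q :: "nat \<Rightarrow> 'a \<Rightarrow> real"
  assumes sets: "\<And>i j. i < K \<Longrightarrow> j \<in> {1..K} \<Longrightarrow> {x \<in> space M. Q i x \<le> q j} \<in> events"
    and mono: "\<And>j j'. j \<le> j' \<Longrightarrow> q j \<le> q j'"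
    and bound: "\<And>i j. i < K \<Longrightarrow> j \<in> {1..K} \<Longrightarrow> prob {x \<in> space M. Q i x \<le> q j} \<le> \<beta> * real j"
  shows "prob {x \<in> space M. step_up_rejects K q (\<lambda>i. Q i x)} \<le> \<beta> * real K * (\<Sum>j=1..K. 1 / real j)"
proof -
  define E where "E i j = {x \<in> space M. Q i x \<le> q j}" for i j
  txt \<open>Markov's inequality for \<open>g\<close>, which is at least \<open>1\<close> wherever the test rejects.\<close>
  define g where "g x = (\<Sum>i<K. \<Sum>j=1..K. BY_weight K j * indicator (E i j) x)" for x
  have int_E: "integrable M (indicator (E i j) :: 'a \<Rightarrow> real)" if "i < K" "j \<in> {1..K}" for i j
    using sets[OF that] by (intro integrable_real_indicator) (auto simp: E_def emeasure_eq_measure)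
  have int_g: "integrable M g"
    unfolding g_def using int_E
    by (intro Bochner_Integration.integrable_sum integrable_mult_right) auto
  have "\<forall>x\<in>space M. 0 \<le> g x"
    unfolding g_def by (auto intro!: sum_nonneg mult_nonneg_nonneg BY_weight_nonneg)
  have "step_up_rejects K q (\<lambda>i. Q i x) \<Longrightarrow> 1 \<le> g x" if "x \<in> space M" for x
    using step_up_rejects_imp_weight_sum_ge[of K q "\<lambda>i. Q i x"] mono that
    by (simp add: g_def E_def indicator_def of_bool_def)
  then have "prob {x \<in> space M. step_up_rejects K q (\<lambda>i. Q i x)} \<le> prob {x \<in> space M. 1 \<le> g x}"
    using int_g by (intro finite_measure_mono) auto
  also have "\<dots> \<le> (\<integral>x. g x \<partial>M) / 1"
    using int_g \<open>\<forall>x\<in>space M. 0 \<le> g x\<close>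
    by (intro integral_Markov_inequality_measure[where A="space M"]) auto
  also have "(\<integral>x. g x \<partial>M) = (\<Sum>i<K. \<Sum>j=1..K. \<integral>x. BY_weight K j * indicator (E i j) x \<partial>M)"
  proof -
    have "(\<integral>x. g x \<partial>M) = (\<Sum>i<K. \<integral>x. (\<Sum>j=1..K. BY_weight K j * indicator (E i j) x) \<partial>M)"
      unfolding g_def using int_E
      by (intro Bochner_Integration.integral_sum Bochner_Integration.integrable_sum
          integrable_mult_right) auto
    also have "\<dots> = (\<Sum>i<K. \<Sum>j=1..K. \<integral>x. BY_weight K j * indicator (E i j) x \<partial>M)"
      using int_E
      by (intro sum.cong refl Bochner_Integration.integral_sum integrable_mult_right) auto
    finally show ?thesis .
  qed
  also have "\<dots> = (\<Sum>i<K. \<Sum>j=1..K. BY_weight K j * prob (E i j))"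
    by (simp add: E_def Int_absorb2)
  also have "\<dots> / 1 \<le> (\<Sum>i<K. \<Sum>j=1..K. BY_weight K j * (\<beta> * real j))"
    unfolding div_by_1 E_def using bound by (intro sum_mono mult_left_mono BY_weight_nonneg) auto
  also have "\<dots> = (\<Sum>i<K. \<beta> * (\<Sum>j=1..K. BY_weight K j * real j))"
    by (simp add: sum_distrib_left mult.left_commute)
  also have "\<dots> = \<beta> * real K * (\<Sum>j=1..K. 1 / real j)"
    unfolding sum_BY_weight_times by simp
  finally show ?thesis .
qed

section \<open>The BH-based OOD test\<close>

lemma bh_declare_ood_iff_step_up_rejects:
  "bh_declare_ood alpha eps K s n cal x \<longleftrightarrow>
   step_up_rejects K (\<lambda>j. alpha * real j / (CK eps K * real K)) (\<lambda>i. conf_pval s n cal i x)"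
  by (simp add: bh_declare_ood_def step_up_rejects_def)

lemma sets_PiM_measure_bh_declare_ood_le:
  assumes "prob_space M" and s: "\<And>i. i < K \<Longrightarrow> s i \<in> borel_measurable M"
  shows "{cal \<in> space (PiM {..<n} (\<lambda>_. M)).
            measure M {x \<in> space M. bh_declare_ood alpha eps K s n cal x} \<le> alpha}
         \<in> sets (PiM {..<n} (\<lambda>_. M))"
proof -
  interpret prob_space M by fact
  let ?P = "PiM {..<n} (\<lambda>_. M)"
  let ?q = "\<lambda>j. alpha * real j / (CK eps K * real K)"
  txt \<open>The test sees \<open>(cal, x)\<close> only through the finitely many comparisons of scores.\<close>
  define R where "R (Z :: (nat \<times> nat) set) \<longleftrightarrow>
      step_up_rejects K ?q (\<lambda>i. (1 + real (card {k. (i, k) \<in> Z})) / (1 + real n))" for Z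
  let ?I = "{..<K} \<times> {..<n}"
  have bh_R: "bh_declare_ood alpha eps K s n cal x \<longleftrightarrow>
      R {ik \<in> ?I. s (fst ik) x \<le> s (fst ik) (cal (snd ik))}" for cal x
    unfolding bh_declare_ood_iff_step_up_rejects R_def
    by (intro step_up_rejects_cong) (simp add: conf_pval_def)
  have "{\<omega> \<in> space (?P \<Otimes>\<^sub>M M). s (fst ik) (snd \<omega>) \<le> s (fst ik) (fst \<omega> (snd ik))} \<in> sets (?P \<Otimes>\<^sub>M M)"
    if "ik \<in> ?I" for ik
  proof -
    have cal: "(\<lambda>\<omega>. s (fst ik) (fst \<omega> (snd ik))) \<in> borel_measurable (?P \<Otimes>\<^sub>M M)"
      using that s
      by (intro measurable_compose[OF measurable_compose[OF measurable_fst
            measurable_component_singleton]]) auto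
    have test: "(\<lambda>\<omega>. s (fst ik) (snd \<omega>)) \<in> borel_measurable (?P \<Otimes>\<^sub>M M)"
      using that s by (intro measurable_compose[OF measurable_snd]) auto
    show ?thesis
      using borel_measurable_le[OF test cal] .
  qed
  then have "{\<omega> \<in> space (?P \<Otimes>\<^sub>M M). R {ik \<in> ?I. s (fst ik) (snd \<omega>) \<le> s (fst ik) (fst \<omega> (snd ik))}}
      \<in> sets (?P \<Otimes>\<^sub>M M)"
    by (intro sets_Collect_finite_Collect) auto
  then have [measurable]:
      "(\<lambda>cal. measure M {x \<in> space M. bh_declare_ood alpha eps K s n cal x}) \<in> borel_measurable ?P"
    unfolding bh_R by (rule borel_measurable_measure_section)
  show ?thesis
    by measurable
qed

lemma CK_gt_1:
  assumes "0 < eps" "0 < K"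
  shows "1 < CK eps K"
proof -
  have "1 \<le> (\<Sum>j=1..K. 1 / real j)"
    using assms(2) member_le_sum[of 1 "{1..K}" "\<lambda>j. 1 / real j"] by simp
  then have "1 + eps \<le> (1 + eps) * (\<Sum>j=1..K. 1 / real j)"
    using assms(1) mult_left_mono[of 1 _ "1 + eps"] by simp
  then show ?thesis
    unfolding CK_def using assms(1) by linarith
qed

lemma a_coef_le:
  assumes "0 < alpha" "alpha < 1" "0 < eps" "j \<in> {1..K}"
  shows "a_coef alpha eps K n j \<le> n"
proof -
  define q where "q = alpha * real j / (CK eps K * real K)"
  have "0 < K" "1 < CK eps K"
    using assms CK_gt_1[OF assms(3), of K] by auto
  have "alpha * real j < real j" "real j \<le> real K"
    using assms by auto
  moreover have "real K < CK eps K * real K"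
    using \<open>0 < K\<close> \<open>1 < CK eps K\<close> by simp
  ultimately have "alpha * real j < CK eps K * real K"
    by linarith
  then have "q < 1"
    using \<open>0 < K\<close> \<open>1 < CK eps K\<close> by (simp add: q_def divide_less_eq)
  then have "real (n + 1) * q < real (n + 1) * 1"
    by (intro mult_strict_left_mono) auto
  then have "\<lfloor>real (n + 1) * q\<rfloor> < int (n + 1)"
    by (simp only: floor_less_iff of_int_of_nat_eq mult_1_right)
  then show ?thesis
    unfolding a_coef_def q_def[symmetric] nat_le_iff by linarith
qed

lemma mu_coef_nonneg: "0 \<le> mu_coef alpha eps K n j"
  by (simp add: mu_coef_def)

lemma mu_coef_le:
  assumes "0 \<le> alpha * real j / (CK eps K * real K)"
  shows "mu_coef alpha eps K n j \<le> alpha * real j / (CK eps K * real K)"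
proof -
  define q where "q = alpha * real j / (CK eps K * real K)"
  define a where "a = a_coef alpha eps K n j"
  have "0 \<le> \<lfloor>real (n + 1) * q\<rfloor>"
    using assms unfolding q_def[symmetric] by simp
  then have "real a = of_int \<lfloor>real (n + 1) * q\<rfloor>"
    unfolding a_def a_coef_def q_def by (rule of_nat_nat)
  then have a_le: "real a \<le> real (n + 1) * q"
    by linarith
  have "a + b_coef alpha eps K n j = max a (n + 1)"
    unfolding b_coef_def a_def by simp
  then have "mu_coef alpha eps K n j = real a / real (max a (n + 1))"
    unfolding mu_coef_def a_def[symmetric] by simp
  also have "\<dots> \<le> real a / real (n + 1)"
    by (intro divide_left_mono) auto
  also have "\<dots> \<le> q"
    using a_le by (simp add: divide_le_eq mult.commute)
  finally show ?thesis
    unfolding q_def .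
qed

lemma (in prob_space) prob_bh_declare_ood_le:
  fixes n :: nat
  assumes s: "\<And>i. i < K \<Longrightarrow> s i \<in> borel_measurable M" and "0 \<le> alpha" "0 < eps"
    and calibrated: "\<And>i j. i < K \<Longrightarrow> j \<in> {1..K} \<Longrightarrow> a_coef alpha eps K n j
        \<le> card {k. k < n \<and> survival M (s i) (s i (cal k)) \<le> (1 + eps) * mu_coef alpha eps K n j}"
  shows "prob {x \<in> space M. bh_declare_ood alpha eps K s n cal x} \<le> alpha"
proof -
  define q where "q j = alpha * real j / (CK eps K * real K)" for j
  define \<beta> where "\<beta> = (1 + eps) * alpha / (CK eps K * real K)"
  have "0 \<le> CK eps K"
    unfolding CK_def using \<open>0 < eps\<close> by (intro mult_nonneg_nonneg sum_nonneg) auto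
  then have q_nonneg: "0 \<le> q j" for j
    using \<open>0 \<le> alpha\<close> by (simp add: q_def)
  have q_mono: "q j \<le> q j'" if "j \<le> j'" for j j'
    unfolding q_def using that \<open>0 \<le> alpha\<close> \<open>0 \<le> CK eps K\<close>
    by (intro divide_right_mono mult_left_mono) auto
  have "prob {x \<in> space M. conf_pval s n cal i x \<le> q j} \<le> \<beta> * real j"
    if "i < K" "j \<in> {1..K}" for i j
  proof -
    have "prob {x \<in> space M. conf_pval s n cal i x \<le> q j} \<le> (1 + eps) * mu_coef alpha eps K n j"
      using s[OF that(1)] q_nonneg calibrated[OF that] mu_coef_nonneg \<open>0 < eps\<close>
      by (intro measure_conf_pval_le) (auto simp: q_def a_coef_def)
    also have "\<dots> \<le> (1 + eps) * q j"
      using mu_coef_le[of alpha j eps K n] q_nonneg[of j] \<open>0 < eps\<close>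
      unfolding q_def by (intro mult_left_mono) auto
    finally show ?thesis
      by (simp add: \<beta>_def q_def)
  qed
  then have "prob {x \<in> space M. step_up_rejects K q (\<lambda>i. conf_pval s n cal i x)}
      \<le> \<beta> * real K * (\<Sum>j=1..K. 1 / real j)"
    using s q_nonneg q_mono by (intro Benjamini_Yekutieli sets_conf_pval_le) auto
  moreover have "\<beta> * real K * (\<Sum>j=1..K. 1 / real j) \<le> alpha"
    using \<open>0 \<le> alpha\<close> \<open>0 < eps\<close> by (cases "K = 0") (simp_all add: \<beta>_def CK_def)
  moreover have "(\<lambda>j. alpha * real j / (CK eps K * real K)) = q"
    by (simp add: q_def fun_eq_iff)
  ultimately show ?thesis
    unfolding bh_declare_ood_iff_step_up_rejects by simp
qed

theorem theorem1:
  fixes M :: "'x measure" and s :: "nat \<Rightarrow> 'x \<Rightarrow> real"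
    and K n :: nat and alpha delta eps :: real
  assumes "prob_space M"
    and "\<And>i. i < K \<Longrightarrow> s i \<in> borel_measurable M"
    and "\<And>i t. i < K \<Longrightarrow> measure M {x \<in> space M. s i x = t} = 0"
    and "0 < alpha" and "alpha < 1" and "0 < delta" and "delta < 1" and "0 < eps"
    and "\<forall>j\<in>{1..K}. reg_inc_beta ((1 + eps) * mu_coef alpha eps K n j)
                      (a_coef alpha eps K n j) (b_coef alpha eps K n j)
                    \<ge> 1 - delta / real K ^ 2"
  shows "measure (PiM {..<n} (\<lambda>_. M))
           {cal \<in> space (PiM {..<n} (\<lambda>_. M)).
              measure M {x \<in> space M. bh_declare_ood alpha eps K s n cal x} \<le> alpha}
         \<ge> 1 - delta"
proof -
  interpret prob_space M by fact
  let ?P = "PiM {..<n} (\<lambda>_. M)" and ?I = "{..<K} \<times> {1..K}"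
  interpret P: prob_space ?P
    using assms(1) by (rule prob_space_PiM)
  define calibrated where "calibrated ij cal \<longleftrightarrow> a_coef alpha eps K n (snd ij) \<le>
      card {k. k < n \<and> survival M (s (fst ij)) (s (fst ij) (cal k))
                  \<le> (1 + eps) * mu_coef alpha eps K n (snd ij)}"
    for ij cal
  have "{cal \<in> space ?P. calibrated ij cal} \<in> P.events" if "ij \<in> ?I" for ij
    unfolding calibrated_def using that assms(2)
    by (intro sets_PiM_Collect_hits[where R="\<lambda>Z. _ \<le> card Z"] sets_survival_le) auto
  moreover have "1 - delta / real K ^ 2 \<le> P.prob {cal \<in> space ?P. calibrated ij cal}"
    if "ij \<in> ?I" for ij
    unfolding calibrated_def using that assms(2-5,8,9) mu_coef_nonneg
    by (intro order_trans[OF _ reg_inc_beta_le_prob_PiM_card] a_coef_le) (auto simp: b_coef_def)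
  ultimately have "1 - real (card ?I) * (delta / real K ^ 2)
      \<le> P.prob {cal \<in> space ?P. \<forall>ij\<in>?I. calibrated ij cal}"
    by (intro P.prob_Collect_Ball_ge) auto
  also have "\<dots> \<le> P.prob
      {cal \<in> space ?P. prob {x \<in> space M. bh_declare_ood alpha eps K s n cal x} \<le> alpha}"
    using assms(2,4,8) sets_PiM_measure_bh_declare_ood_le[OF assms(1,2)]
    by (intro P.finite_measure_mono) (auto intro!: prob_bh_declare_ood_le simp: calibrated_def)
  finally show ?thesis
    using \<open>0 < delta\<close> by (cases "K = 0") (simp_all add: power2_eq_square)
qed

end
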